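(* Let $\{a_i\}_{i=1}^n$ be a non-decreasing sequence of real numbers and $\tau>0$. If $\pi$ is a permutation of $[n]$ such that $\pi(i)<\pi(j)$ whenever $a_j-a_i>\tau$, then $|a_{\pi(i)}-a_i|\le\tau$ for all $i\in[n]$. *)

theory Defs
  imports Main "HOL-Combinatorics.Permutations" Complex_Main
begin

end

theory Submission
  imports Defs
begin

text \<open>If a(\<pi> i) > a i + \<tau>, put k = \<pi> i: every j \<ge> k has a j - a i > \<tau>, hence
  \<pi> j > k, so the permutation would map the final segment starting at k injectively into the
  strictly shorter one starting after k. The case a(\<pi> i) < a i - \<tau> is the mirror image,
  obtained by applying the same counting argument to the inverse permutation.\<close>

lemma permutes_exists_ge_mapped_le:
  fixes \<pi> :: "'a::linorder \<Rightarrow> 'a"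
  assumes perm: "\<pi> permutes S" and fin: "finite S" and k: "k \<in> S"
  shows "\<exists>j\<in>S. k \<le> j \<and> \<pi> j \<le> k"
proof (rule ccontr)
  assume "\<not> ?thesis"
  then have "\<pi> ` {j\<in>S. k \<le> j} \<subseteq> {j\<in>S. k < j}"
    using permutes_in_image[OF perm] by auto
  moreover have "inj_on \<pi> {j\<in>S. k \<le> j}"
    using permutes_inj[OF perm] by (rule inj_on_subset) simp
  ultimately have "card {j\<in>S. k \<le> j} \<le> card {j\<in>S. k < j}"
    using fin by (intro card_inj_on_le) auto
  moreover have "{j\<in>S. k < j} \<subset> {j\<in>S. k \<le> j}"
    using k by auto
  then have "card {j\<in>S. k < j} < card {j\<in>S. k \<le> j}"
    using fin by (intro psubset_card_mono) auto
  ultimately show False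
    by simp
qed

lemma permutes_exists_le_mapped_ge:
  fixes \<pi> :: "'a::linorder \<Rightarrow> 'a"
  assumes perm: "\<pi> permutes S" and fin: "finite S" and k: "k \<in> S"
  shows "\<exists>j\<in>S. j \<le> k \<and> k \<le> \<pi> j"
proof -
  obtain j where j: "j \<in> S" "k \<le> j" "inv \<pi> j \<le> k"
    using permutes_exists_ge_mapped_le[OF permutes_inv[OF perm] fin k] by blast
  show ?thesis
  proof (intro bexI conjI)
    show "inv \<pi> j \<in> S"
      using j(1) permutes_in_image[OF permutes_inv[OF perm]] by simp
    show "k \<le> \<pi> (inv \<pi> j)"
      using j(2) permutes_inverses(1)[OF perm] by simp
  qed (fact j(3))
qed

theorem lemma13:
  fixes a :: "nat \<Rightarrow> real" and n :: nat and \<tau> :: real and \<pi> :: "nat \<Rightarrow> nat"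
  assumes mono: "\<And>i j. i \<in> {1..n} \<Longrightarrow> j \<in> {1..n} \<Longrightarrow> i \<le> j \<Longrightarrow> a i \<le> a j"
    and tau: "\<tau> > 0"
    and perm: "\<pi> permutes {1..n}"
    and cond: "\<And>i j. i \<in> {1..n} \<Longrightarrow> j \<in> {1..n} \<Longrightarrow> a j - a i > \<tau> \<Longrightarrow> \<pi> i < \<pi> j"
  shows "\<forall>i \<in> {1..n}. \<bar>a (\<pi> i) - a i\<bar> \<le> \<tau>"
proof
  fix i assume i: "i \<in> {1..n}"
  define k where "k = \<pi> i"
  have k: "k \<in> {1..n}"
    using i permutes_in_image[OF perm] by (simp add: k_def)
  have "\<not> a k - a i > \<tau>"
  proof
    assume "a k - a i > \<tau>"
    moreover obtain j where "j \<in> {1..n}" "k \<le> j" "\<pi> j \<le> k"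
      using permutes_exists_ge_mapped_le[OF perm _ k] by auto
    ultimately show False
      using cond[OF i, of j] mono[OF k, of j] by (auto simp: k_def)
  qed
  moreover have "\<not> a i - a k > \<tau>"
  proof
    assume "a i - a k > \<tau>"
    moreover obtain j where "j \<in> {1..n}" "j \<le> k" "k \<le> \<pi> j"
      using permutes_exists_le_mapped_ge[OF perm _ k] by auto
    ultimately show False
      using cond[OF _ i, of j] mono[OF _ k, of j] by (auto simp: k_def)
  qed
  ultimately show "\<bar>a (\<pi> i) - a i\<bar> \<le> \<tau>"
    by (simp add: k_def)
qed

end
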